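(* The following equations are derivable in equational logic from $\mathsf{Md}_\bot$: $0\cdot 0=0$; $-0=0$; $0\cdot x=0\cdot(-x)$; $0\cdot(x\cdot y)=0\cdot(x+y)$; $-(x\cdot y)=x\cdot(-y)$; $(-1)\cdot x=-x$; $(-x)^{-1}=-(x^{-1})$; $(x\cdot x^{-1})\cdot x^{-1}=x^{-1}$; $-\bot=\bot$; $\bot^{-1}=\bot$.
   Context: The signature has one sort, constants $0,1,\bot$, binary operations $+,\cdot$ and unary operations $-$ and $(\,\cdot\,)^{-1}$; $^{-1}$ binds stronger than $\cdot$, which binds stronger than $+$. $\mathsf{Md}_\bot$ is the set of equations (variables universally quantified): $(x+y)+z=x+(y+z)$; $x+y=y+x$; $x+0=x$; $x+(-x)=0\cdot x$; $(x\cdot y)\cdot z=x\cdot(y\cdot z)$; $x\cdot y=y\cdot x$; $1\cdot x=x$; $x\cdot(y+z)=x\cdot y+x\cdot z$; $-(-x)=x$; $0\cdot(x\cdot x)=0\cdot x$; $(x^{-1})^{-1}=x+0\cdot x^{-1}$; $x\cdot x^{-1}=1+0\cdot x^{-1}$; $(x\cdot y)^{-1}=x^{-1}\cdot y^{-1}$; $1^{-1}=1$; $0^{-1}=\bot$; $x+\bot=\bot$; $x\cdot\bot=\bot$. *)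

theory Defs
  imports Main
begin

datatype trm = Var nat | Zero | One | Bot
  | Add trm trm | Mul trm trm | Neg trm | Inv trm

primrec subst :: "(nat \<Rightarrow> trm) \<Rightarrow> trm \<Rightarrow> trm" where
  "subst \<sigma> (Var n) = \<sigma> n"
| "subst \<sigma> Zero = Zero"
| "subst \<sigma> One = One"
| "subst \<sigma> Bot = Bot"
| "subst \<sigma> (Add s t) = Add (subst \<sigma> s) (subst \<sigma> t)"
| "subst \<sigma> (Mul s t) = Mul (subst \<sigma> s) (subst \<sigma> t)"
| "subst \<sigma> (Neg s) = Neg (subst \<sigma> s)"
| "subst \<sigma> (Inv s) = Inv (subst \<sigma> s)"

abbreviation "vx \<equiv> Var 0"
abbreviation "vy \<equiv> Var 1"
abbreviation "vz \<equiv> Var 2"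

definition Md_bot :: "(trm \<times> trm) set" where
  "Md_bot = {
    (Add (Add vx vy) vz, Add vx (Add vy vz)),
    (Add vx vy, Add vy vx),
    (Add vx Zero, vx),
    (Add vx (Neg vx), Mul Zero vx),
    (Mul (Mul vx vy) vz, Mul vx (Mul vy vz)),
    (Mul vx vy, Mul vy vx),
    (Mul One vx, vx),
    (Mul vx (Add vy vz), Add (Mul vx vy) (Mul vx vz)),
    (Neg (Neg vx), vx),
    (Mul Zero (Mul vx vx), Mul Zero vx),
    (Inv (Inv vx), Add vx (Mul Zero (Inv vx))),
    (Mul vx (Inv vx), Add One (Mul Zero (Inv vx))),
    (Inv (Mul vx vy), Mul (Inv vx) (Inv vy)),
    (Inv One, One),
    (Inv Zero, Bot),
    (Add vx Bot, Bot),
    (Mul vx Bot, Bot) }"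

inductive derivable :: "(trm \<times> trm) set \<Rightarrow> trm \<Rightarrow> trm \<Rightarrow> bool" for E where
  ax: "(s, t) \<in> E \<Longrightarrow> derivable E (subst \<sigma> s) (subst \<sigma> t)"
| refl: "derivable E t t"
| sym: "derivable E s t \<Longrightarrow> derivable E t s"
| trans: "derivable E s t \<Longrightarrow> derivable E t u \<Longrightarrow> derivable E s u"
| cong_Add: "derivable E s1 t1 \<Longrightarrow> derivable E s2 t2 \<Longrightarrow> derivable E (Add s1 s2) (Add t1 t2)"
| cong_Mul: "derivable E s1 t1 \<Longrightarrow> derivable E s2 t2 \<Longrightarrow> derivable E (Mul s1 s2) (Mul t1 t2)"
| cong_Neg: "derivable E s t \<Longrightarrow> derivable E (Neg s) (Neg t)"
| cong_Inv: "derivable E s t \<Longrightarrow> derivable E (Inv s) (Inv t)"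

end

theory Submission
  imports Defs
begin

text \<open>The equation 0 * 0 = 0 follows from 0 * 1 = 0 and 0 * (-1) = 0 * 1 via
distributivity over 1 + (-1) = 0 * 1, and 0 * (x * y) = 0 * (x + y) is obtained by expanding
0 * (x + y)^2 and absorbing the summands 0 * x, 0 * y into 0 * (x * y). Additive inverses are
unique up to the equality of their zero-multiples, which yields -(x * y) = x * (-y) and hence
(-1) * x = -x. Since (-1)^(-1) squares to 1 it has zero-multiple 0, so it equals -1, and
multiplicativity of inversion gives (-x)^(-1) = -(x^(-1)).\<close>

abbreviation Md_derivable (infix "\<approx>" 50) where "s \<approx> t \<equiv> derivable Md_bot s t"

declare derivable.trans [trans]

lemmas Md_cong = derivable.refl derivable.cong_Add derivable.cong_Mul derivable.cong_Neg
  derivable.cong_Inv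

lemma Md_bot_instance:
  assumes "(l, r) \<in> Md_bot"
  shows "subst (\<lambda>n. if n = 0 then a else if n = 1 then b else c) l
       \<approx> subst (\<lambda>n. if n = 0 then a else if n = 1 then b else c) r"
  using assms by (rule derivable.ax)

lemma Md_add_assoc: "Add (Add a b) c \<approx> Add a (Add b c)"
  using Md_bot_instance[of "Add (Add vx vy) vz" "Add vx (Add vy vz)" a b c]
  by (simp add: Md_bot_def)

lemma Md_add_comm: "Add a b \<approx> Add b a"
  using Md_bot_instance[of "Add vx vy" "Add vy vx" a b] by (simp add: Md_bot_def)

lemma Md_add_zero: "Add a Zero \<approx> a"
  using Md_bot_instance[of "Add vx Zero" vx a] by (simp add: Md_bot_def)

lemma Md_add_neg: "Add a (Neg a) \<approx> Mul Zero a"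
  using Md_bot_instance[of "Add vx (Neg vx)" "Mul Zero vx" a] by (simp add: Md_bot_def)

lemma Md_mul_assoc: "Mul (Mul a b) c \<approx> Mul a (Mul b c)"
  using Md_bot_instance[of "Mul (Mul vx vy) vz" "Mul vx (Mul vy vz)" a b c]
  by (simp add: Md_bot_def)

lemma Md_mul_comm: "Mul a b \<approx> Mul b a"
  using Md_bot_instance[of "Mul vx vy" "Mul vy vx" a b] by (simp add: Md_bot_def)

lemma Md_one_mul: "Mul One a \<approx> a"
  using Md_bot_instance[of "Mul One vx" vx a] by (simp add: Md_bot_def)

lemma Md_distrib: "Mul a (Add b c) \<approx> Add (Mul a b) (Mul a c)"
  using Md_bot_instance[of "Mul vx (Add vy vz)" "Add (Mul vx vy) (Mul vx vz)" a b c]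
  by (simp add: Md_bot_def)

lemma Md_neg_neg: "Neg (Neg a) \<approx> a"
  using Md_bot_instance[of "Neg (Neg vx)" vx a] by (simp add: Md_bot_def)

lemma Md_zero_mul_square: "Mul Zero (Mul a a) \<approx> Mul Zero a"
  using Md_bot_instance[of "Mul Zero (Mul vx vx)" "Mul Zero vx" a] by (simp add: Md_bot_def)

lemma Md_inv_inv: "Inv (Inv a) \<approx> Add a (Mul Zero (Inv a))"
  using Md_bot_instance[of "Inv (Inv vx)" "Add vx (Mul Zero (Inv vx))" a]
  by (simp add: Md_bot_def)

lemma Md_mul_inv: "Mul a (Inv a) \<approx> Add One (Mul Zero (Inv a))"
  using Md_bot_instance[of "Mul vx (Inv vx)" "Add One (Mul Zero (Inv vx))" a]
  by (simp add: Md_bot_def)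

lemma Md_inv_mul: "Inv (Mul a b) \<approx> Mul (Inv a) (Inv b)"
  using Md_bot_instance[of "Inv (Mul vx vy)" "Mul (Inv vx) (Inv vy)" a b]
  by (simp add: Md_bot_def)

lemma Md_inv_one: "Inv One \<approx> One"
  using Md_bot_instance[of "Inv One" One] by (simp add: Md_bot_def)

lemma Md_inv_zero: "Inv Zero \<approx> Bot"
  using Md_bot_instance[of "Inv Zero" Bot] by (simp add: Md_bot_def)

lemma Md_add_bot: "Add a Bot \<approx> Bot"
  using Md_bot_instance[of "Add vx Bot" Bot a] by (simp add: Md_bot_def)

lemma Md_mul_bot: "Mul a Bot \<approx> Bot"
  using Md_bot_instance[of "Mul vx Bot" Bot a] by (simp add: Md_bot_def)

lemma Md_mul_one: "Mul a One \<approx> a"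
  using Md_mul_comm Md_one_mul by (rule derivable.trans)

lemma Md_zero_mul_neg: "Mul Zero a \<approx> Mul Zero (Neg a)"
proof -
  have "Mul Zero a \<approx> Add a (Neg a)" by (rule derivable.sym[OF Md_add_neg])
  also have "\<dots> \<approx> Add (Neg a) a" by (rule Md_add_comm)
  also have "\<dots> \<approx> Add (Neg a) (Neg (Neg a))" by (intro derivable.sym[OF Md_neg_neg] Md_cong)
  also have "\<dots> \<approx> Mul Zero (Neg a)" by (rule Md_add_neg)
  finally show ?thesis .
qed

lemma Md_zero_mul_zero: "Mul Zero Zero \<approx> Zero"
proof -
  have zero_mul_neg_one: "Mul Zero (Neg One) \<approx> Zero"
    using derivable.sym[OF Md_zero_mul_neg] Md_mul_one by (rule derivable.trans)
  have "Mul Zero Zero \<approx> Mul Zero (Mul Zero One)"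
    by (intro derivable.sym[OF Md_mul_one] Md_cong)
  also have "\<dots> \<approx> Mul Zero (Add One (Neg One))"
    by (intro derivable.sym[OF Md_add_neg] Md_cong)
  also have "\<dots> \<approx> Add (Mul Zero One) (Mul Zero (Neg One))" by (rule Md_distrib)
  also have "\<dots> \<approx> Add Zero Zero" by (intro Md_mul_one zero_mul_neg_one Md_cong)
  also have "\<dots> \<approx> Zero" by (rule Md_add_zero)
  finally show ?thesis .
qed

lemma Md_neg_zero: "Neg Zero \<approx> Zero"
proof -
  have "Neg Zero \<approx> Add (Neg Zero) Zero" by (rule derivable.sym[OF Md_add_zero])
  also have "\<dots> \<approx> Add Zero (Neg Zero)" by (rule Md_add_comm)
  also have "\<dots> \<approx> Mul Zero Zero" by (rule Md_add_neg)
  also have "\<dots> \<approx> Zero" by (rule Md_zero_mul_zero)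
  finally show ?thesis .
qed

lemma Md_zero_mul_idem: "Mul Zero (Mul Zero a) \<approx> Mul Zero a"
proof -
  have "Mul Zero (Mul Zero a) \<approx> Mul (Mul Zero Zero) a" by (rule derivable.sym[OF Md_mul_assoc])
  also have "\<dots> \<approx> Mul Zero a" by (intro Md_zero_mul_zero Md_cong)
  finally show ?thesis .
qed

lemma Md_add_zero_mul_self: "Add a (Mul Zero a) \<approx> a"
proof -
  have "Add a (Mul Zero a) \<approx> Add (Mul a One) (Mul a Zero)"
    by (intro derivable.sym[OF Md_mul_one] Md_mul_comm Md_cong)
  also have "\<dots> \<approx> Mul a (Add One Zero)" by (rule derivable.sym[OF Md_distrib])
  also have "\<dots> \<approx> Mul a One" by (intro Md_add_zero Md_cong)
  also have "\<dots> \<approx> a" by (rule Md_mul_one)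
  finally show ?thesis .
qed

lemma Md_zero_mul_add_self: "Add (Mul Zero a) (Mul Zero a) \<approx> Mul Zero a"
proof -
  have "Add (Mul Zero a) (Mul Zero a) \<approx> Add (Mul Zero a) (Mul Zero (Mul Zero a))"
    by (intro derivable.sym[OF Md_zero_mul_idem] Md_cong)
  also have "\<dots> \<approx> Mul Zero a" by (rule Md_add_zero_mul_self)
  finally show ?thesis .
qed

lemma Md_mul_zero_mul_left_commute: "Mul a (Mul Zero b) \<approx> Mul Zero (Mul a b)"
proof -
  have "Mul a (Mul Zero b) \<approx> Mul (Mul a Zero) b" by (rule derivable.sym[OF Md_mul_assoc])
  also have "\<dots> \<approx> Mul (Mul Zero a) b" by (intro Md_mul_comm Md_cong)
  also have "\<dots> \<approx> Mul Zero (Mul a b)" by (rule Md_mul_assoc)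
  finally show ?thesis .
qed

lemma Md_zero_mul_mul_absorb: "Add (Mul Zero (Mul a b)) (Mul Zero a) \<approx> Mul Zero (Mul a b)"
proof -
  have "Add (Mul Zero (Mul a b)) (Mul Zero a) \<approx> Add (Mul a (Mul Zero b)) (Mul a Zero)"
    by (intro derivable.sym[OF Md_mul_zero_mul_left_commute] Md_mul_comm Md_cong)
  also have "\<dots> \<approx> Mul a (Add (Mul Zero b) Zero)" by (rule derivable.sym[OF Md_distrib])
  also have "\<dots> \<approx> Mul a (Mul Zero b)" by (intro Md_add_zero Md_cong)
  also have "\<dots> \<approx> Mul Zero (Mul a b)" by (rule Md_mul_zero_mul_left_commute)
  finally show ?thesis .
qed

lemma Md_zero_mul_mul_eq_add: "Mul Zero (Mul a b) \<approx> Mul Zero (Add a b)"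
proof -
  let ?p = "Mul Zero (Mul a b)"
  have "Mul Zero (Add a b) \<approx> Mul Zero (Mul (Add a b) (Add a b))"
    by (rule derivable.sym[OF Md_zero_mul_square])
  also have "\<dots> \<approx> Mul Zero (Add (Mul (Add a b) a) (Mul (Add a b) b))" by (intro Md_distrib Md_cong)
  also have "\<dots> \<approx> Mul Zero (Add (Mul a (Add a b)) (Mul b (Add a b)))" by (intro Md_mul_comm Md_cong)
  also have "\<dots> \<approx> Mul Zero (Add (Add (Mul a a) (Mul a b)) (Add (Mul b a) (Mul b b)))"
    by (intro Md_distrib Md_cong)
  also have "\<dots> \<approx> Add (Mul Zero (Add (Mul a a) (Mul a b))) (Mul Zero (Add (Mul b a) (Mul b b)))"
    by (rule Md_distrib)
  also have "\<dots> \<approx> Add (Add (Mul Zero (Mul a a)) ?p) (Add (Mul Zero (Mul b a)) (Mul Zero (Mul b b)))"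
    by (intro Md_distrib Md_cong)
  also have "\<dots> \<approx> Add (Add (Mul Zero a) ?p) (Add (Mul Zero (Mul b a)) (Mul Zero b))"
    by (intro Md_zero_mul_square Md_cong)
  also have "\<dots> \<approx> Add (Add ?p (Mul Zero a)) (Add (Mul Zero (Mul b a)) (Mul Zero b))"
    by (intro Md_add_comm Md_cong)
  also have "\<dots> \<approx> Add ?p (Mul Zero (Mul b a))"
    by (intro Md_zero_mul_mul_absorb Md_cong)
  also have "\<dots> \<approx> Add ?p ?p" by (intro Md_mul_comm Md_cong)
  also have "\<dots> \<approx> ?p" by (rule Md_zero_mul_add_self)
  finally show ?thesis by (rule derivable.sym)
qed

text \<open>Inverses are unique only modulo zero-multiples, hence the second hypothesis.\<close>

lemma Md_neg_unique:
  assumes inverse: "Add a b \<approx> Mul Zero a" and same_zero_mul: "Mul Zero b \<approx> Mul Zero a"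
  shows "Neg a \<approx> b"
proof -
  have "Neg a \<approx> Add (Neg a) (Mul Zero (Neg a))"
    by (rule derivable.sym[OF Md_add_zero_mul_self])
  also have "\<dots> \<approx> Add (Neg a) (Mul Zero a)"
    by (intro derivable.sym[OF Md_zero_mul_neg] Md_cong)
  also have "\<dots> \<approx> Add (Neg a) (Add a b)" by (intro derivable.sym[OF inverse] Md_cong)
  also have "\<dots> \<approx> Add (Add (Neg a) a) b" by (rule derivable.sym[OF Md_add_assoc])
  also have "\<dots> \<approx> Add (Add a (Neg a)) b" by (intro Md_add_comm Md_cong)
  also have "\<dots> \<approx> Add (Mul Zero a) b" by (intro Md_add_neg Md_cong)
  also have "\<dots> \<approx> Add (Mul Zero b) b" by (intro derivable.sym[OF same_zero_mul] Md_cong)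
  also have "\<dots> \<approx> Add b (Mul Zero b)" by (rule Md_add_comm)
  also have "\<dots> \<approx> b" by (rule Md_add_zero_mul_self)
  finally show ?thesis .
qed

lemma Md_neg_mul_right: "Neg (Mul a b) \<approx> Mul a (Neg b)"
proof (rule Md_neg_unique)
  have "Add (Mul a b) (Mul a (Neg b)) \<approx> Mul a (Add b (Neg b))"
    by (rule derivable.sym[OF Md_distrib])
  also have "\<dots> \<approx> Mul a (Mul Zero b)" by (intro Md_add_neg Md_cong)
  also have "\<dots> \<approx> Mul Zero (Mul a b)" by (rule Md_mul_zero_mul_left_commute)
  finally show "Add (Mul a b) (Mul a (Neg b)) \<approx> Mul Zero (Mul a b)" .
  have "Mul Zero (Mul a (Neg b)) \<approx> Mul a (Mul Zero (Neg b))"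
    by (rule derivable.sym[OF Md_mul_zero_mul_left_commute])
  also have "\<dots> \<approx> Mul a (Mul Zero b)" by (intro derivable.sym[OF Md_zero_mul_neg] Md_cong)
  also have "\<dots> \<approx> Mul Zero (Mul a b)" by (rule Md_mul_zero_mul_left_commute)
  finally show "Mul Zero (Mul a (Neg b)) \<approx> Mul Zero (Mul a b)" .
qed

lemma Md_neg_one_mul: "Mul (Neg One) a \<approx> Neg a"
proof -
  have "Mul (Neg One) a \<approx> Mul a (Neg One)" by (rule Md_mul_comm)
  also have "\<dots> \<approx> Neg (Mul a One)" by (rule derivable.sym[OF Md_neg_mul_right])
  also have "\<dots> \<approx> Neg a" by (intro Md_mul_one Md_cong)
  finally show ?thesis .
qed

lemma Md_neg_one_mul_self: "Mul (Neg One) (Neg One) \<approx> One"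
  using Md_neg_one_mul Md_neg_neg by (rule derivable.trans)

lemma Md_inv_neg_one: "Inv (Neg One) \<approx> Neg One"
proof -
  let ?u = "Inv (Neg One)"
  have "Mul ?u ?u \<approx> Inv (Mul (Neg One) (Neg One))" by (rule derivable.sym[OF Md_inv_mul])
  also have "\<dots> \<approx> Inv One" by (intro Md_neg_one_mul_self Md_cong)
  also have "\<dots> \<approx> One" by (rule Md_inv_one)
  finally have square: "Mul ?u ?u \<approx> One" .
  have "Mul Zero ?u \<approx> Mul Zero (Mul ?u ?u)" by (rule derivable.sym[OF Md_zero_mul_square])
  also have "\<dots> \<approx> Mul Zero One" by (intro square Md_cong)
  also have "\<dots> \<approx> Zero" by (rule Md_mul_one)
  finally have zero_mul: "Mul Zero ?u \<approx> Zero" .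
  have "Mul (Neg One) ?u \<approx> Add One (Mul Zero ?u)" by (rule Md_mul_inv)
  also have "\<dots> \<approx> Add One Zero" by (intro zero_mul Md_cong)
  also have "\<dots> \<approx> One" by (rule Md_add_zero)
  finally have inverse: "Mul (Neg One) ?u \<approx> One" .
  have "?u \<approx> Mul ?u One" by (rule derivable.sym[OF Md_mul_one])
  also have "\<dots> \<approx> Mul ?u (Mul (Neg One) (Neg One))"
    by (intro derivable.sym[OF Md_neg_one_mul_self] Md_cong)
  also have "\<dots> \<approx> Mul (Mul ?u (Neg One)) (Neg One)" by (rule derivable.sym[OF Md_mul_assoc])
  also have "\<dots> \<approx> Mul (Mul (Neg One) ?u) (Neg One)" by (intro Md_mul_comm Md_cong)
  also have "\<dots> \<approx> Mul One (Neg One)" by (intro inverse Md_cong)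
  also have "\<dots> \<approx> Neg One" by (rule Md_one_mul)
  finally show ?thesis .
qed

lemma Md_inv_neg: "Inv (Neg a) \<approx> Neg (Inv a)"
proof -
  have "Inv (Neg a) \<approx> Inv (Mul (Neg One) a)" by (intro derivable.sym[OF Md_neg_one_mul] Md_cong)
  also have "\<dots> \<approx> Mul (Inv (Neg One)) (Inv a)" by (rule Md_inv_mul)
  also have "\<dots> \<approx> Mul (Neg One) (Inv a)" by (intro Md_inv_neg_one Md_cong)
  also have "\<dots> \<approx> Neg (Inv a)" by (rule Md_neg_one_mul)
  finally show ?thesis .
qed

lemma Md_mul_inv_mul_inv: "Mul (Mul a (Inv a)) (Inv a) \<approx> Inv a"
proof -
  let ?i = "Inv a"
  have "Mul (Mul a ?i) ?i \<approx> Mul (Add One (Mul Zero ?i)) ?i" by (intro Md_mul_inv Md_cong)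
  also have "\<dots> \<approx> Mul ?i (Add One (Mul Zero ?i))" by (rule Md_mul_comm)
  also have "\<dots> \<approx> Add (Mul ?i One) (Mul ?i (Mul Zero ?i))" by (rule Md_distrib)
  also have "\<dots> \<approx> Add ?i (Mul Zero (Mul ?i ?i))" 
    by (intro Md_mul_one Md_mul_zero_mul_left_commute Md_cong)
  also have "\<dots> \<approx> Add ?i (Mul Zero ?i)" by (intro Md_zero_mul_square Md_cong)
  also have "\<dots> \<approx> ?i" by (rule Md_add_zero_mul_self)
  finally show ?thesis .
qed

lemma Md_neg_bot: "Neg Bot \<approx> Bot"
  using derivable.sym[OF Md_neg_one_mul] Md_mul_bot by (rule derivable.trans)

lemma Md_inv_bot: "Inv Bot \<approx> Bot"
proof -
  have "Inv Bot \<approx> Inv (Inv Zero)" by (intro derivable.sym[OF Md_inv_zero] Md_cong)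
  also have "\<dots> \<approx> Add Zero (Mul Zero (Inv Zero))" by (rule Md_inv_inv)
  also have "\<dots> \<approx> Add Zero (Mul Zero Bot)" by (intro Md_inv_zero Md_cong)
  also have "\<dots> \<approx> Add Zero Bot" by (intro Md_mul_bot Md_cong)
  also have "\<dots> \<approx> Bot" by (rule Md_add_bot)
  finally show ?thesis .
qed

theorem proposition2p1:
  shows "derivable Md_bot (Mul Zero Zero) Zero
       \<and> derivable Md_bot (Neg Zero) Zero
       \<and> derivable Md_bot (Mul Zero vx) (Mul Zero (Neg vx))
       \<and> derivable Md_bot (Mul Zero (Mul vx vy)) (Mul Zero (Add vx vy))
       \<and> derivable Md_bot (Neg (Mul vx vy)) (Mul vx (Neg vy))
       \<and> derivable Md_bot (Mul (Neg One) vx) (Neg vx)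
       \<and> derivable Md_bot (Inv (Neg vx)) (Neg (Inv vx))
       \<and> derivable Md_bot (Mul (Mul vx (Inv vx)) (Inv vx)) (Inv vx)
       \<and> derivable Md_bot (Neg Bot) Bot
       \<and> derivable Md_bot (Inv Bot) Bot"
  by (intro conjI Md_zero_mul_zero Md_neg_zero Md_zero_mul_neg Md_zero_mul_mul_eq_add
      Md_neg_mul_right Md_neg_one_mul Md_inv_neg Md_mul_inv_mul_inv Md_neg_bot Md_inv_bot)

end
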